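(* Let $\nu\ge2$, $\rho>0$, $\lambda_1,\dots,\lambda_\nu>0$. Let $H(u)=P\big(\sum_{n=2}^\nu\lambda_nY_n<u\big)$ and, if $\nu\ge3$, $\tilde H(u)=P\big(\sum_{n=3}^\nu\lambda_nY_n<u\big)$ for $u>0$, where $Y_2,\dots,Y_\nu$ are independent $\chi^2_1$ variables; if $\nu=2$ set $\tilde H(u)=1$ for $u>0$. For $0<y_1<\rho/\lambda_1$ define $$\psi_{\rm cond}(y_2\mid y_1)=\frac{g_1(y_2)\,\tilde H(\rho-\lambda_1y_1-\lambda_2y_2)}{H(\rho-\lambda_1y_1)}\ \text{ if } 0<y_2<(\rho-\lambda_1y_1)/\lambda_2,\qquad 0\ \text{ otherwise},$$ where $g_1$ is the $\chi^2_1$ density. Then for any $0<y_{10}<y_{11}<\rho/\lambda_1$, the ratio $\psi_{\rm cond}(y_2\mid y_{11})/\psi_{\rm cond}(y_2\mid y_{10})$ is nonincreasing in $y_2$ over $0<y_2<(\rho-\lambda_1y_{10})/\lambda_2$.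
   Context: $\psi_{\rm cond}(\cdot\mid y_1)$ is the conditional density of $Y_2=\lambda_2^{-1}X_2^2$ given $Y_1=\lambda_1^{-1}X_1^2=y_1$ when $X\sim N_\nu(0,\mathrm{diag}(\lambda_1,\dots,\lambda_\nu))$ is truncated to the ball $\{x:x^Tx<\rho\}$. *)

theory Defs
  imports "HOL-Probability.Probability"
begin

definition chi2_1_density :: "real \<Rightarrow> real" where
  "chi2_1_density y = (if 0 < y then exp (- y / 2) / sqrt (2 * pi * y) else 0)"

definition chi2_1 :: "real measure" where
  "chi2_1 = density lborel (\<lambda>y. ennreal (chi2_1_density y))"

definition chi2_weighted_cdf :: "(nat \<Rightarrow> real) \<Rightarrow> nat \<Rightarrow> nat \<Rightarrow> real \<Rightarrow> real" where
  "chi2_weighted_cdf lam m nu u =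
     measure (PiM {m..nu} (\<lambda>_. chi2_1))
       {Y \<in> space (PiM {m..nu} (\<lambda>_. chi2_1)). (\<Sum>n=m..nu. lam n * Y n) < u}"

definition H_fun :: "(nat \<Rightarrow> real) \<Rightarrow> nat \<Rightarrow> real \<Rightarrow> real" where
  "H_fun lam nu u = chi2_weighted_cdf lam 2 nu u"

definition Htilde_fun :: "(nat \<Rightarrow> real) \<Rightarrow> nat \<Rightarrow> real \<Rightarrow> real" where
  "Htilde_fun lam nu u = (if 3 \<le> nu then chi2_weighted_cdf lam 3 nu u else 1)"

definition psi_cond :: "(nat \<Rightarrow> real) \<Rightarrow> nat \<Rightarrow> real \<Rightarrow> real \<Rightarrow> real \<Rightarrow> real" where
  "psi_cond lam nu rho y1 y2 =
     (if 0 < y2 \<and> y2 < (rho - lam 1 * y1) / lam 2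
      then chi2_1_density y2 * Htilde_fun lam nu (rho - lam 1 * y1 - lam 2 * y2)
           / H_fun lam nu (rho - lam 1 * y1)
      else 0)"

end

theory Submission
  imports Defs
begin

text \<open>Write c1 = rho - lam1 y11 and d = lam1 (y11 - y10) > 0. After the factors not depending
  on y2 are divided out, psi_cond(y2 | y11) / psi_cond(y2 | y10) is a positive constant times
  Htilde(c1 - lam2 y2) / Htilde(c1 - lam2 y2 + d), so it suffices that Htilde is log-concave on
  (0, oo): then u |-> Htilde(u) / Htilde(u + d) is nondecreasing.

  The distribution function of sum_{n>=m} lam_n Y_n arises from that of sum_{n>m} lam_n Y_n by
  G |-> (u |-> E G(u - lam_m Y)) with Y ~ chi2(1), starting from the indicator of (0, oo).
  Substituting Y = Z^2 turns this into 2 int_0^oo phi(z) G(u - lam_m z^2) dz, whose integrand is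
  log-concave jointly in (u, z) because phi is log-concave and u - lam_m z^2 is concave.
  Log-concavity of the integral then follows from the one-dimensional Prekopa-Leindler
  inequality, which for nonincreasing functions on [0, oo) reduces via the layer-cake formula
  to the superadditivity of the lengths of their superlevel intervals.\<close>

abbreviation half_line_integral :: "(real \<Rightarrow> real) \<Rightarrow> ennreal" where
  "half_line_integral f \<equiv> \<integral>\<^sup>+ z. ennreal (f z) * indicator {0..} z \<partial>lborel"

lemma emeasure_lborel_atLeast_0: "emeasure lborel {0::real..} = \<infinity>"
proof (rule ccontr)
  assume "emeasure lborel {0::real..} \<noteq> \<infinity>"
  then obtain r where r: "emeasure lborel {0::real..} = ennreal r" "0 \<le> r"
    by (cases "emeasure lborel {0::real..}" rule: ennreal_cases) auto
  have "emeasure lborel {0..r+1} \<le> emeasure lborel {0::real..}" by (rule emeasure_mono) auto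
  then show False using r by simp
qed

definition down_closed :: "real set \<Rightarrow> bool" where
  "down_closed D \<longleftrightarrow> D \<subseteq> {0..} \<and> (\<forall>x\<in>D. \<forall>y. 0 \<le> y \<longrightarrow> y \<le> x \<longrightarrow> y \<in> D)"

lemma down_closed_superlevel:
  fixes f :: "real \<Rightarrow> real"
  assumes "\<And>x y. 0 \<le> x \<Longrightarrow> x \<le> y \<Longrightarrow> f y \<le> f x"
  shows "down_closed {z. 0 \<le> z \<and> s < f z}"
  unfolding down_closed_def
proof (intro conjI ballI allI impI subsetI)
  fix x z assume "x \<in> {z. 0 \<le> z \<and> s < f z}" "0 \<le> z" "z \<le> x"
  then show "z \<in> {z. 0 \<le> z \<and> s < f z}" using assms[of z x] by simp
qed auto

lemma down_closedD: "down_closed D \<Longrightarrow> x \<in> D \<Longrightarrow> 0 \<le> y \<Longrightarrow> y \<le> x \<Longrightarrow> y \<in> D"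
  unfolding down_closed_def by blast

lemma down_closed_unbounded:
  assumes "down_closed D" and "\<not> bdd_above D"
  shows "D = {0..}"
proof
  show "{0..} \<subseteq> D"
  proof
    fix y :: real assume "y \<in> {0..}"
    obtain x where "x \<in> D" "y < x" using \<open>\<not> bdd_above D\<close> by (meson bdd_above.unfold linorder_not_le)
    then show "y \<in> D" using down_closedD[OF \<open>down_closed D\<close>] \<open>y \<in> {0..}\<close> by auto
  qed
qed (use assms in \<open>auto simp: down_closed_def\<close>)

lemma emeasure_down_closed:
  assumes D: "down_closed D" and "0 \<in> D" and bdd: "bdd_above D"
  shows "emeasure lborel D = ennreal (Sup D)"
proof -
  define a where "a = Sup D"
  have ub: "x \<le> a" if "x \<in> D" for x using cSup_upper[OF that bdd] a_def by simp
  have "0 \<le> a" using ub[OF \<open>0 \<in> D\<close>] .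
  have below: "x \<in> D" if x: "0 \<le> x" "x < a" for x
  proof -
    obtain y where "y \<in> D" "x < y" using less_cSupE[of x D] x \<open>0 \<in> D\<close> a_def by blast
    then show ?thesis using down_closedD[OF D] x by auto
  qed
  have nonneg: "0 \<le> x" if "x \<in> D" for x using D that unfolding down_closed_def by auto
  have "D = {0..a} \<or> D = {0..<a}"
  proof (cases "a \<in> D")
    case True
    have "{0..a} \<subseteq> D" using down_closedD[OF D True] by auto
    then show ?thesis using ub nonneg by auto
  next
    case False
    have "D \<subseteq> {0..<a}"
    proof
      fix x assume "x \<in> D"
      then have "x \<le> a" "x \<noteq> a" "0 \<le> x" using ub nonneg False by auto
      then show "x \<in> {0..<a}" by simp
    qed
    then show ?thesis using below by auto
  qed
  then have "emeasure lborel D = ennreal a" using \<open>0 \<le> a\<close> by auto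
  then show ?thesis unfolding a_def .
qed

lemma ennreal_convex_comb_le_iff:
  fixes t a b c :: real
  assumes "0 \<le> t" "t \<le> 1" "0 \<le> a" "0 \<le> b" "0 \<le> c"
  shows "ennreal (1-t) * ennreal a + ennreal t * ennreal b \<le> ennreal c \<longleftrightarrow> (1-t)*a + t*b \<le> c"
  using assms by (simp add: ennreal_mult'[symmetric] ennreal_plus[symmetric] ennreal_le_iff del: ennreal_plus)

lemma brunn_minkowski_down_closed:
  fixes A B C :: "real set" and t :: real
  assumes t: "0 < t" "t < 1"
    and "down_closed A" "down_closed B" "down_closed C" and "0 \<in> A" "0 \<in> B"
    and comb: "\<And>x y. x \<in> A \<Longrightarrow> y \<in> B \<Longrightarrow> (1-t)*x + t*y \<in> C"
  shows "ennreal (1-t) * emeasure lborel A + ennreal t * emeasure lborel B \<le> emeasure lborel C"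
proof (cases "bdd_above C")
  case False
  then have "C = {0..}" using down_closed_unbounded \<open>down_closed C\<close> by simp
  then show ?thesis by (simp add: emeasure_lborel_atLeast_0)
next
  case True
  have ub: "x \<le> Sup C" if "x \<in> C" for x using cSup_upper[OF that True] .
  have "x \<le> Sup C / (1-t)" if "x \<in> A" for x
    using ub[OF comb[OF that \<open>0 \<in> B\<close>]] t by (simp add: field_simps)
  then have "bdd_above A" by (rule bdd_aboveI)
  have "y \<le> Sup C / t" if "y \<in> B" for y
    using ub[OF comb[OF \<open>0 \<in> A\<close> that]] t by (simp add: field_simps)
  then have "bdd_above B" by (rule bdd_aboveI)
  have "0 \<le> Sup A" "0 \<le> Sup B" using cSup_upper assms \<open>bdd_above A\<close> \<open>bdd_above B\<close> by auto
  have "Sup A \<le> (Sup C - t*y)/(1-t)" if "y \<in> B" for y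
  proof (rule cSup_least)
    show "x \<le> (Sup C - t*y)/(1-t)" if "x \<in> A" for x
      using ub[OF comb[OF that \<open>y \<in> B\<close>]] t by (simp add: field_simps)
  qed (use \<open>0 \<in> A\<close> in auto)
  then have "Sup B \<le> (Sup C - (1-t) * Sup A)/t"
    by (intro cSup_least) (use \<open>0 \<in> B\<close> t in \<open>auto simp: field_simps\<close>)
  then have "(1-t) * Sup A + t * Sup B \<le> Sup C" using t by (simp add: field_simps)
  moreover have "0 \<in> C" using comb[OF \<open>0 \<in> A\<close> \<open>0 \<in> B\<close>] by simp
  then have "emeasure lborel A = ennreal (Sup A)" "emeasure lborel B = ennreal (Sup B)"
    "emeasure lborel C = ennreal (Sup C)" "0 \<le> Sup C"
    using emeasure_down_closed assms \<open>bdd_above A\<close> \<open>bdd_above B\<close> True ub by blast+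
  ultimately show ?thesis
    using ennreal_convex_comb_le_iff[of t "Sup A" "Sup B" "Sup C"] t \<open>0 \<le> Sup A\<close> \<open>0 \<le> Sup B\<close>
    by simp
qed

lemma nn_integral_layer_cake:
  fixes f :: "real \<Rightarrow> real"
  assumes [measurable]: "f \<in> borel_measurable borel"
  shows "half_line_integral f
       = (\<integral>\<^sup>+ s. emeasure lborel {z. 0 \<le> z \<and> s < f z} * indicator {0<..} s \<partial>lborel)"
proof -
  let ?S = "{(z, s). 0 \<le> z \<and> 0 < s \<and> s < f z}"
  have "half_line_integral f = (\<integral>\<^sup>+ z. \<integral>\<^sup>+ s. indicator ?S (z, s) \<partial>lborel \<partial>lborel)"
  proof (rule nn_integral_cong)
    fix z :: real
    have "(\<integral>\<^sup>+ s. indicator ?S (z, s) \<partial>lborel) = (\<integral>\<^sup>+ s. indicator {0<..<f z} s * indicator {0..} z \<partial>lborel)"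
      by (intro nn_integral_cong) (auto simp: indicator_def)
    also have "\<dots> = ennreal (f z) * indicator {0..} z"
      by (cases "0 \<le> f z") (auto simp: nn_integral_multc ennreal_neg)
    finally show "ennreal (f z) * indicator {0..} z = (\<integral>\<^sup>+ s. indicator ?S (z, s) \<partial>lborel)" by simp
  qed
  also have "\<dots> = (\<integral>\<^sup>+ s. \<integral>\<^sup>+ z. indicator ?S (z, s) \<partial>lborel \<partial>lborel)"
    by (subst lborel_pair.Fubini') (auto simp: case_prod_unfold)
  also have "\<dots> = (\<integral>\<^sup>+ s. emeasure lborel {z. 0 \<le> z \<and> s < f z} * indicator {0<..} s \<partial>lborel)"
  proof (rule nn_integral_cong)
    fix s :: real
    have "(\<integral>\<^sup>+ z. indicator ?S (z, s) \<partial>lborel)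
       = (\<integral>\<^sup>+ z. indicator {z. 0 \<le> z \<and> s < f z} z * indicator {0<..} s \<partial>lborel)"
      by (intro nn_integral_cong) (auto simp: indicator_def)
    then show "(\<integral>\<^sup>+ z. indicator ?S (z, s) \<partial>lborel)
       = emeasure lborel {z. 0 \<le> z \<and> s < f z} * indicator {0<..} s"
      by (simp add: nn_integral_multc)
  qed
  finally show ?thesis .
qed

lemma borel_measurable_emeasure_superlevel:
  fixes f :: "real \<Rightarrow> real"
  assumes [measurable]: "f \<in> borel_measurable borel"
  shows "(\<lambda>s. emeasure lborel {z. 0 \<le> z \<and> s < f z}) \<in> borel_measurable lborel"
proof -
  have "Measurable.pred (borel \<Otimes>\<^sub>M borel) (\<lambda>p::real\<times>real. 0 \<le> snd p \<and> fst p < f (snd p))"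
    by measurable
  then have "{(s, z). 0 \<le> z \<and> s < f z} \<in> sets (lborel \<Otimes>\<^sub>M lborel)"
    by (simp add: Measurable.pred_def space_pair_measure case_prod_unfold cong: sets_pair_measure_cong)
  from lborel.measurable_emeasure_Pair[OF this] show ?thesis by simp
qed

lemma prekopa_leindler_min_antimono:
  fixes f g h :: "real \<Rightarrow> real" and t :: real
  assumes t: "0 < t" "t < 1"
    and [measurable]: "f \<in> borel_measurable borel" "g \<in> borel_measurable borel" "h \<in> borel_measurable borel"
    and f: "\<And>x y. 0 \<le> x \<Longrightarrow> x \<le> y \<Longrightarrow> f y \<le> f x"
    and g: "\<And>x y. 0 \<le> x \<Longrightarrow> x \<le> y \<Longrightarrow> g y \<le> g x"
    and h: "\<And>x y. 0 \<le> x \<Longrightarrow> x \<le> y \<Longrightarrow> h y \<le> h x"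
    and fgh: "\<And>x y. 0 \<le> x \<Longrightarrow> 0 \<le> y \<Longrightarrow> min (f x) (g y) \<le> h ((1-t)*x + t*y)"
    and "f 0 = 1" and "g 0 = 1"
  shows "ennreal (1-t) * half_line_integral f + ennreal t * half_line_integral g \<le> half_line_integral h"
proof -
  let ?m = "\<lambda>f s. emeasure lborel {z. 0 \<le> z \<and> s < f z} * indicator {0<..} s"
  have [measurable]: "?m f \<in> borel_measurable lborel" "?m g \<in> borel_measurable lborel"
    using borel_measurable_emeasure_superlevel by measurable
  have levels: "ennreal (1-t) * ?m f s + ennreal t * ?m g s \<le> ?m h s" for s
  proof (cases "0 < s \<and> s < 1")
    case True
    have comb: "(1-t)*x + t*y \<in> {z. 0 \<le> z \<and> s < h z}"
      if "x \<in> {z. 0 \<le> z \<and> s < f z}" "y \<in> {z. 0 \<le> z \<and> s < g z}" for x y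
      using that fgh[of x y] t by (auto simp: min_less_iff_conj intro: less_le_trans)
    have "ennreal (1-t) * emeasure lborel {z. 0 \<le> z \<and> s < f z}
          + ennreal t * emeasure lborel {z. 0 \<le> z \<and> s < g z}
        \<le> emeasure lborel {z. 0 \<le> z \<and> s < h z}"
      using True assms comb
      by (intro brunn_minkowski_down_closed[OF t] down_closed_superlevel[OF f]
          down_closed_superlevel[OF g] down_closed_superlevel[OF h]) auto
    then show ?thesis using True by (simp add: algebra_simps)
  next
    case False
    show ?thesis
    proof (cases "0 < s")
      case True
      then have "1 \<le> s" using False by simp
      then have "{z. 0 \<le> z \<and> s < f z} = {}" "{z. 0 \<le> z \<and> s < g z} = {}"
        using f[of 0] g[of 0] assms by force+
      then show ?thesis by (simp only:) simp
    qed simp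
  qed
  have "ennreal (1-t) * half_line_integral f + ennreal t * half_line_integral g
      = (\<integral>\<^sup>+ s. ennreal (1-t) * ?m f s + ennreal t * ?m g s \<partial>lborel)"
    by (simp add: nn_integral_layer_cake nn_integral_add nn_integral_cmult)
  also have "\<dots> \<le> (\<integral>\<^sup>+ s. ?m h s \<partial>lborel)"
    by (rule nn_integral_mono) (rule levels)
  also have "\<dots> = half_line_integral h"
    by (simp add: nn_integral_layer_cake)
  finally show ?thesis .
qed

lemma min_le_powr_convex_comb:
  fixes a b t :: real
  assumes "0 \<le> a" "0 \<le> b" "0 < t" "t < 1"
  shows "min a b \<le> a powr (1-t) * b powr t"
proof (cases "a = 0 \<or> b = 0")
  case False
  then have "0 < a" "0 < b" using assms by auto
  have "min a b = min a b powr (1-t) * min a b powr t"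
    using \<open>0 < a\<close> \<open>0 < b\<close> by (simp add: powr_add[symmetric])
  also have "\<dots> \<le> a powr (1-t) * b powr t"
    using assms \<open>0 < a\<close> \<open>0 < b\<close> by (intro mult_mono powr_mono2) auto
  finally show ?thesis .
qed (use assms in auto)

lemma half_line_integral_divide:
  fixes f :: "real \<Rightarrow> real" and c I :: real
  assumes "0 < c" "\<And>z. 0 \<le> f z" and [measurable]: "f \<in> borel_measurable borel"
    and "half_line_integral f = ennreal I"
  shows "half_line_integral (\<lambda>z. f z / c) = ennreal (I / c)"
proof -
  have "half_line_integral (\<lambda>z. f z / c) = (\<integral>\<^sup>+ z. ennreal (1/c) * (ennreal (f z) * indicator {0..} z) \<partial>lborel)"
  proof (intro nn_integral_cong)
    fix z
    have "ennreal (f z / c) = ennreal (1/c) * ennreal (f z)"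
      using assms by (simp add: ennreal_mult[symmetric])
    then show "ennreal (f z / c) * indicator {0..} z = ennreal (1/c) * (ennreal (f z) * indicator {0..} z)"
      by (simp add: mult.assoc)
  qed
  also have "\<dots> = ennreal (1/c) * ennreal I"
    by (subst nn_integral_cmult) (use assms in auto)
  also have "\<dots> = ennreal (I / c)"
    using assms by (simp add: ennreal_mult'[symmetric])
  finally show ?thesis .
qed

text \<open>Normalising f and g to take the value 1 at 0 turns the geometric mean into a minimum.\<close>

lemma prekopa_leindler_antimono:
  fixes f g h :: "real \<Rightarrow> real" and t If Ig Ih :: real
  assumes t: "0 < t" "t < 1"
    and [measurable]: "f \<in> borel_measurable borel" "g \<in> borel_measurable borel" "h \<in> borel_measurable borel"
    and nonneg: "\<And>z. 0 \<le> f z" "\<And>z. 0 \<le> g z" "\<And>z. 0 \<le> h z"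
    and f: "\<And>x y. 0 \<le> x \<Longrightarrow> x \<le> y \<Longrightarrow> f y \<le> f x"
    and g: "\<And>x y. 0 \<le> x \<Longrightarrow> x \<le> y \<Longrightarrow> g y \<le> g x"
    and h: "\<And>x y. 0 \<le> x \<Longrightarrow> x \<le> y \<Longrightarrow> h y \<le> h x"
    and fgh: "\<And>x y. 0 \<le> x \<Longrightarrow> 0 \<le> y \<Longrightarrow> f x powr (1-t) * g y powr t \<le> h ((1-t)*x + t*y)"
    and "0 < f 0" and "0 < g 0"
    and If: "half_line_integral f = ennreal If" and Ig: "half_line_integral g = ennreal Ig"
    and Ih: "half_line_integral h = ennreal Ih"
    and "0 \<le> If" "0 \<le> Ig" "0 \<le> Ih"
  shows "If powr (1-t) * Ig powr t \<le> Ih"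
proof (cases "If = 0 \<or> Ig = 0")
  case False
  then have "0 < If" "0 < Ig" using assms by auto
  define c where "c = f 0 powr (1-t) * g 0 powr t"
  have "0 < c" using assms c_def by simp
  have "ennreal (1-t) * half_line_integral (\<lambda>z. f z / f 0)
          + ennreal t * half_line_integral (\<lambda>z. g z / g 0)
        \<le> half_line_integral (\<lambda>z. h z / c)"
  proof (rule prekopa_leindler_min_antimono[OF t])
    show "min (f x / f 0) (g y / g 0) \<le> h ((1-t)*x + t*y) / c" if "0 \<le> x" "0 \<le> y" for x y
    proof -
      have "min (f x / f 0) (g y / g 0) \<le> (f x / f 0) powr (1-t) * (g y / g 0) powr t"
        using min_le_powr_convex_comb nonneg assms by simp
      also have "\<dots> = (f x powr (1-t) * g y powr t) / c"
        using nonneg assms by (simp add: powr_divide c_def)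
      also have "\<dots> \<le> h ((1-t)*x + t*y) / c"
        using fgh[OF that] \<open>0 < c\<close> by (simp add: divide_right_mono)
      finally show ?thesis .
    qed
  qed (use f g h assms \<open>0 < c\<close> in \<open>auto simp: divide_right_mono\<close>)
  then have "ennreal (1-t) * ennreal (If / f 0) + ennreal t * ennreal (Ig / g 0) \<le> ennreal (Ih / c)"
    using half_line_integral_divide[OF _ nonneg(1) _ If] half_line_integral_divide[OF _ nonneg(2) _ Ig]
      half_line_integral_divide[OF \<open>0 < c\<close> nonneg(3) _ Ih] assms
    by simp
  then have arith: "(1-t) * (If / f 0) + t * (Ig / g 0) \<le> Ih / c"
    using ennreal_convex_comb_le_iff[of t "If / f 0" "Ig / g 0" "Ih / c"] t assms \<open>0 < c\<close> by simp
  have "(If powr (1-t) * Ig powr t) / c = (If / f 0) powr (1-t) * (Ig / g 0) powr t"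
    using assms by (simp add: powr_divide c_def)
  also have "\<dots> \<le> (1-t) * (If / f 0) + t * (Ig / g 0)"
    using Youngs_inequality_0[of "1-t" t "If / f 0" "Ig / g 0"] t \<open>0 < If\<close> \<open>0 < Ig\<close> assms by simp
  also note arith
  finally show ?thesis using \<open>0 < c\<close> by (simp add: divide_le_cancel)
qed (use assms in auto)

lemma std_normal_density_antimono:
  assumes "0 \<le> a" "a \<le> b"
  shows "std_normal_density b \<le> std_normal_density a"
proof -
  have "a\<^sup>2 \<le> b\<^sup>2" using assms by (simp add: power_mono)
  then show ?thesis by (simp add: std_normal_density_def divide_right_mono)
qed

lemma power2_convex_comb_le:
  fixes a b t :: real
  assumes "0 \<le> t" "t \<le> 1"
  shows "((1-t)*a + t*b)\<^sup>2 \<le> (1-t)*a\<^sup>2 + t*b\<^sup>2"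
proof -
  have "(1-t)*a\<^sup>2 + t*b\<^sup>2 - ((1-t)*a + t*b)\<^sup>2 = t*(1-t)*(a-b)\<^sup>2"
    by (simp add: power2_eq_square algebra_simps)
  moreover have "0 \<le> t*(1-t)*(a-b)\<^sup>2" using assms by simp
  ultimately show ?thesis by linarith
qed

lemma std_normal_density_log_concave:
  assumes "0 < t" "t < 1"
  shows "std_normal_density a powr (1-t) * std_normal_density b powr t
       \<le> std_normal_density ((1-t)*a + t*b)"
proof -
  define K where "K = ln (sqrt (2 * pi))"
  have exp_form: "std_normal_density x = exp (- x\<^sup>2 / 2 - K)" for x
    by (simp add: std_normal_density_def exp_diff K_def)
  have "std_normal_density a powr (1-t) * std_normal_density b powr t
      = exp ((1-t) * (- a\<^sup>2 / 2 - K) + t * (- b\<^sup>2 / 2 - K))"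
    unfolding exp_form exp_powr_real by (simp add: exp_add mult.commute)
  also have "\<dots> \<le> exp (- ((1-t)*a + t*b)\<^sup>2 / 2 - K)"
    using power2_convex_comb_le[of t a b] assms by (simp add: algebra_simps)
  finally show ?thesis unfolding exp_form .
qed

lemma nn_integral_std_normal_density_half_line: "2 * half_line_integral std_normal_density = 1"
proof -
  let ?p = std_normal_density
  have "(\<integral>\<^sup>+ z. ennreal (?p z) \<partial>lborel) = 1"
  proof -
    interpret prob_space "density lborel ?p" by (rule prob_space_normal_density) simp
    show ?thesis using emeasure_space_1 by (simp add: emeasure_density)
  qed
  moreover have "(\<integral>\<^sup>+ z. ennreal (?p z) \<partial>lborel)
      = half_line_integral ?p + (\<integral>\<^sup>+ z. ennreal (?p z) * indicator {..<0} z \<partial>lborel)"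
    by (subst nn_integral_add[symmetric]) (auto intro!: nn_integral_cong simp: indicator_def)
  moreover have "(\<integral>\<^sup>+ z. ennreal (?p z) * indicator {..<0} z \<partial>lborel) = half_line_integral ?p"
  proof -
    have "(\<integral>\<^sup>+ z. ennreal (?p z) * indicator {..<0} z \<partial>lborel)
        = (\<integral>\<^sup>+ z. ennreal (?p (- z)) * indicator {..<0} (- z) \<partial>lborel)"
      using nn_integral_real_affine[of "\<lambda>z. ennreal (?p z) * indicator {..<0} z" "-1" 0] by simp
    also have "\<dots> = (\<integral>\<^sup>+ z. ennreal (?p z) * indicator {0<..} z \<partial>lborel)"
      by (auto intro!: nn_integral_cong simp: indicator_def std_normal_density_def)
    also have "\<dots> = half_line_integral ?p"
      by (intro nn_integral_cong_AE eventually_mono[OF AE_lborel_singleton[of 0]])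
         (auto simp: indicator_def)
    finally show ?thesis .
  qed
  ultimately show ?thesis by (simp add: mult_2)
qed

lemma nn_integral_atLeast_0_SUP:
  fixes q :: "real \<Rightarrow> real" and B :: "nat \<Rightarrow> real"
  assumes [measurable]: "q \<in> borel_measurable borel" and q: "\<And>y. 0 \<le> q y"
    and B: "mono B" and unbdd: "\<And>y. \<exists>n. y \<le> B n"
  shows "(\<integral>\<^sup>+ y. ennreal (q y * indicator {0..} y) \<partial>lborel)
       = (SUP n. \<integral>\<^sup>+ y. ennreal (q y * indicator {0..B n} y) \<partial>lborel)"
proof -
  have "ennreal (q y * indicator {0..} y) = (SUP n. ennreal (q y * indicator {0..B n} y))" for y
  proof (rule antisym)
    obtain n where "y \<le> B n" using unbdd by blast
    then show "ennreal (q y * indicator {0..} y) \<le> (SUP n. ennreal (q y * indicator {0..B n} y))"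
      by (intro SUP_upper2[of n]) (auto simp: indicator_def)
    show "(SUP n. ennreal (q y * indicator {0..B n} y)) \<le> ennreal (q y * indicator {0..} y)"
      using q by (intro SUP_least ennreal_leI mult_left_mono) (auto simp: indicator_def)
  qed
  moreover have "incseq (\<lambda>n y. ennreal (q y * indicator {0..B n} y))"
  proof (intro monoI le_funI ennreal_leI)
    fix m n :: nat and y assume "m \<le> n"
    then show "q y * indicator {0..B m} y \<le> q y * indicator {0..B n} y"
      using q[of y] B by (auto simp: indicator_def monoD intro: order.trans)
  qed
  ultimately show ?thesis
    by (simp add: nn_integral_monotone_convergence_SUP[symmetric])
qed

lemma borel_measurable_chi2_1_density[measurable]: "chi2_1_density \<in> borel_measurable borel"
  unfolding chi2_1_density_def[abs_def] by measurable

lemma chi2_1_density_power2: "0 < z \<Longrightarrow> chi2_1_density (z\<^sup>2) * (2 * z) = 2 * std_normal_density z"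
  by (simp add: chi2_1_density_def std_normal_density_def real_sqrt_mult field_simps)

lemma nn_integral_chi2_1_density_substitution:
  fixes F :: "real \<Rightarrow> real" and b :: real
  assumes [measurable]: "F \<in> borel_measurable borel" and "0 \<le> b"
  shows "(\<integral>\<^sup>+ y. ennreal (chi2_1_density y * F y * indicator {0..b\<^sup>2} y) \<partial>lborel)
       = (\<integral>\<^sup>+ z. ennreal (2 * std_normal_density z * F (z\<^sup>2) * indicator {0..b} z) \<partial>lborel)"
proof -
  have "(\<integral>\<^sup>+ y. ennreal (chi2_1_density y * F y * indicator {0\<^sup>2..b\<^sup>2} y) \<partial>lborel)
      = (\<integral>\<^sup>+ z. ennreal (chi2_1_density (z\<^sup>2) * F (z\<^sup>2) * (2 * z) * indicator {0..b} z) \<partial>lborel)"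
    using assms
    by (subst nn_integral_substitution[where g = "\<lambda>x. x ^ 2" and g' = "\<lambda>x. 2 * x"])
       (auto intro!: derivative_eq_intros continuous_intros simp: set_borel_measurable_def)
  also have "\<dots> = (\<integral>\<^sup>+ z. ennreal (2 * std_normal_density z * F (z\<^sup>2) * indicator {0..b} z) \<partial>lborel)"
  proof (intro nn_integral_cong_AE eventually_mono[OF AE_lborel_singleton[of 0]])
    fix z :: real assume "z \<noteq> 0"
    show "ennreal (chi2_1_density (z\<^sup>2) * F (z\<^sup>2) * (2 * z) * indicator {0..b} z)
        = ennreal (2 * std_normal_density z * F (z\<^sup>2) * indicator {0..b} z)"
    proof (cases "0 < z")
      case True
      have "chi2_1_density (z\<^sup>2) * F (z\<^sup>2) * (2 * z) = (chi2_1_density (z\<^sup>2) * (2 * z)) * F (z\<^sup>2)"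
        by (simp only: ac_simps)
      also have "\<dots> = 2 * std_normal_density z * F (z\<^sup>2)"
        by (simp only: chi2_1_density_power2[OF True])
      finally have eq: "chi2_1_density (z\<^sup>2) * F (z\<^sup>2) * (2 * z) = 2 * std_normal_density z * F (z\<^sup>2)" .
      show ?thesis by (simp only: eq)
    qed (use \<open>z \<noteq> 0\<close> in \<open>simp add: indicator_def\<close>)
  qed
  finally show ?thesis by simp
qed

lemma nn_integral_chi2_1:
  fixes F :: "real \<Rightarrow> real"
  assumes [measurable]: "F \<in> borel_measurable borel" and F: "\<And>y. 0 \<le> F y"
  shows "(\<integral>\<^sup>+ y. ennreal (F y) \<partial>chi2_1) = half_line_integral (\<lambda>z. 2 * std_normal_density z * F (z\<^sup>2))"
proof -
  have mono_sq: "mono (\<lambda>n::nat. (real n)\<^sup>2)" by (intro monoI power_mono) auto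
  have unbdd_sq: "\<exists>n::nat. y \<le> (real n)\<^sup>2" for y :: real
  proof -
    obtain n :: nat where "max y 1 \<le> real n" using real_arch_simple by blast
    then have "y \<le> real n * real n" by (smt (verit) mult_le_cancel_left1)
    then show ?thesis by (auto simp: power2_eq_square)
  qed
  have "(\<integral>\<^sup>+ y. ennreal (F y) \<partial>chi2_1)
      = (\<integral>\<^sup>+ y. ennreal (chi2_1_density y * F y * indicator {0..} y) \<partial>lborel)"
    unfolding chi2_1_def
    by (subst nn_integral_density)
       (auto intro!: nn_integral_cong simp: chi2_1_density_def indicator_def ennreal_mult'[symmetric])
  also have "\<dots> = (SUP n. \<integral>\<^sup>+ y. ennreal (chi2_1_density y * F y * indicator {0..(real n)\<^sup>2} y) \<partial>lborel)"
    using F mono_sq unbdd_sq by (intro nn_integral_atLeast_0_SUP) (auto simp: chi2_1_density_def)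
  also have "\<dots> = (SUP n. \<integral>\<^sup>+ z. ennreal (2 * std_normal_density z * F (z\<^sup>2) * indicator {0..real n} z) \<partial>lborel)"
    by (simp add: nn_integral_chi2_1_density_substitution)
  also have "\<dots> = (\<integral>\<^sup>+ z. ennreal (2 * std_normal_density z * F (z\<^sup>2) * indicator {0..} z) \<partial>lborel)"
    using F real_arch_simple
    by (intro nn_integral_atLeast_0_SUP[symmetric]) (auto simp: mono_def)
  also have "\<dots> = half_line_integral (\<lambda>z. 2 * std_normal_density z * F (z\<^sup>2))"
    by (intro nn_integral_cong) (simp add: indicator_def)
  finally show ?thesis .
qed

lemma prob_space_chi2_1: "prob_space chi2_1"
proof
  have "emeasure chi2_1 (space chi2_1) = (\<integral>\<^sup>+ y. ennreal 1 \<partial>chi2_1)"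
    by simp
  also have "\<dots> = (\<integral>\<^sup>+ z. 2 * (ennreal (std_normal_density z) * indicator {0..} z) \<partial>lborel)"
    by (subst nn_integral_chi2_1)
       (auto intro!: nn_integral_cong simp: ennreal_mult mult.assoc less_imp_le[OF normal_density_pos])
  also have "\<dots> = 1"
    using nn_integral_std_normal_density_half_line by (subst nn_integral_cmult) auto
  finally show "emeasure chi2_1 (space chi2_1) = 1" .
qed

definition log_concave_cdf :: "(real \<Rightarrow> real) \<Rightarrow> bool" where
  "log_concave_cdf G \<longleftrightarrow> mono G \<and> (\<forall>u\<le>0. G u = 0) \<and> (\<forall>u>0. 0 < G u) \<and>
     (\<forall>x y t. 0 < t \<longrightarrow> t < 1 \<longrightarrow> G x powr (1-t) * G y powr t \<le> G ((1-t)*x + t*y))"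

lemma
  assumes "log_concave_cdf G"
  shows log_concave_cdf_mono: "mono G"
    and log_concave_cdf_nonpos: "u \<le> 0 \<Longrightarrow> G u = 0"
    and log_concave_cdf_pos: "0 < u \<Longrightarrow> 0 < G u"
    and log_concave_cdf_powr_le: "0 < t \<Longrightarrow> t < 1 \<Longrightarrow> G x powr (1-t) * G y powr t \<le> G ((1-t)*x + t*y)"
  using assms unfolding log_concave_cdf_def by auto

lemma log_concave_cdf_nonneg: "log_concave_cdf G \<Longrightarrow> 0 \<le> G u"
  by (cases "u \<le> 0") (auto simp: log_concave_cdf_nonpos log_concave_cdf_pos less_imp_le)

lemma log_concave_cdf_indicator_pos: "log_concave_cdf (\<lambda>u::real. if 0 < u then 1 else 0)"
  unfolding log_concave_cdf_def
proof (intro conjI allI impI)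
  show "mono (\<lambda>u::real. if 0 < u then 1 else 0 :: real)" by (rule monoI) auto
  fix x y t :: real assume "0 < t" "t < 1"
  then show "(if 0 < x then 1 else 0) powr (1-t) * (if 0 < y then 1 else 0) powr t
      \<le> (if 0 < (1-t)*x + t*y then 1 else (0::real))"
    by (cases "0 < x \<and> 0 < y") (auto simp: add_pos_pos)
qed auto

locale chi2_mixture =
  fixes G L :: "real \<Rightarrow> real" and lam :: real
  assumes G: "log_concave_cdf G" and lam: "0 < lam" and L_nonneg: "\<And>u. 0 \<le> L u"
    and L_eq: "\<And>u. ennreal (L u) = (\<integral>\<^sup>+ y. ennreal (G (u - lam * y)) \<partial>chi2_1)"
begin

definition kernel :: "real \<Rightarrow> real \<Rightarrow> real" where
  "kernel u z = std_normal_density z * G (u - lam * z\<^sup>2)"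

lemma borel_measurable_G[measurable]: "G \<in> borel_measurable borel"
  using log_concave_cdf_mono[OF G] by (rule borel_measurable_mono)

lemma borel_measurable_kernel[measurable]: "kernel u \<in> borel_measurable borel"
  unfolding kernel_def[abs_def] by measurable

lemma kernel_nonneg: "0 \<le> kernel u z"
  by (simp add: kernel_def log_concave_cdf_nonneg[OF G])

lemma kernel_antimono:
  assumes "0 \<le> a" "a \<le> b"
  shows "kernel u b \<le> kernel u a"
proof -
  have "a\<^sup>2 \<le> b\<^sup>2" using assms by (simp add: power_mono)
  then have "G (u - lam * b\<^sup>2) \<le> G (u - lam * a\<^sup>2)"
    using lam log_concave_cdf_mono[OF G] by (simp add: monoD)
  then show ?thesis unfolding kernel_def using std_normal_density_antimono[OF assms]
    by (intro mult_mono) (auto simp: log_concave_cdf_nonneg[OF G] less_imp_le[OF normal_density_pos])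
qed

lemma kernel_log_concave:
  assumes t: "0 < t" "t < 1"
  shows "kernel x a powr (1-t) * kernel y b powr t \<le> kernel ((1-t)*x + t*y) ((1-t)*a + t*b)"
proof -
  let ?c = "(1-t)*a + t*b"
  have "G (x - lam*a\<^sup>2) powr (1-t) * G (y - lam*b\<^sup>2) powr t
      \<le> G ((1-t)*(x - lam*a\<^sup>2) + t*(y - lam*b\<^sup>2))"
    by (rule log_concave_cdf_powr_le[OF G t])
  also have "\<dots> \<le> G ((1-t)*x + t*y - lam*?c\<^sup>2)"
  proof (rule monoD[OF log_concave_cdf_mono[OF G]])
    have "lam * ?c\<^sup>2 \<le> lam * ((1-t)*a\<^sup>2 + t*b\<^sup>2)"
      using power2_convex_comb_le[of t a b] t lam by (simp add: mult_left_mono)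
    then show "(1-t)*(x - lam*a\<^sup>2) + t*(y - lam*b\<^sup>2) \<le> (1-t)*x + t*y - lam*?c\<^sup>2"
      by (simp add: algebra_simps)
  qed
  finally have G_le: "G (x - lam*a\<^sup>2) powr (1-t) * G (y - lam*b\<^sup>2) powr t
      \<le> G ((1-t)*x + t*y - lam*?c\<^sup>2)" .
  have "kernel x a powr (1-t) * kernel y b powr t
      = (std_normal_density a powr (1-t) * std_normal_density b powr t)
        * (G (x - lam*a\<^sup>2) powr (1-t) * G (y - lam*b\<^sup>2) powr t)"
    unfolding kernel_def
    by (simp add: powr_mult log_concave_cdf_nonneg[OF G] less_imp_le[OF normal_density_pos] mult_ac)
  also have "\<dots> \<le> std_normal_density ?c * G ((1-t)*x + t*y - lam*?c\<^sup>2)"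
    by (rule mult_mono[OF std_normal_density_log_concave[OF t] G_le])
       (auto simp: less_imp_le[OF normal_density_pos])
  finally show ?thesis unfolding kernel_def .
qed

lemma half_line_integral_kernel: "half_line_integral (kernel u) = ennreal (L u / 2)"
proof -
  have "ennreal (L u) = half_line_integral (\<lambda>z. 2 * std_normal_density z * G (u - lam * z\<^sup>2))"
    unfolding L_eq using borel_measurable_kernel[of u]
    by (subst nn_integral_chi2_1) (auto simp: kernel_def[abs_def] log_concave_cdf_nonneg[OF G])
  also have "\<dots> = (\<integral>\<^sup>+ z. 2 * (ennreal (kernel u z) * indicator {0..} z) \<partial>lborel)"
    by (intro nn_integral_cong)
       (simp add: kernel_def ennreal_mult mult.assoc log_concave_cdf_nonneg[OF G] less_imp_le[OF normal_density_pos])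
  also have "\<dots> = 2 * half_line_integral (kernel u)"
    by (rule nn_integral_cmult) measurable
  also have "\<dots> = half_line_integral (kernel u) * 2"
    by (rule mult.commute)
  finally have "ennreal (L u) / 2 = half_line_integral (kernel u)"
    by (simp add: mult_divide_eq_ennreal)
  then show ?thesis using L_nonneg by (simp add: ennreal_divide_numeral)
qed

lemma L_mono: "mono L"
proof (rule monoI)
  fix u v :: real assume "u \<le> v"
  have "ennreal (L u) \<le> ennreal (L v)"
    unfolding L_eq using \<open>u \<le> v\<close> log_concave_cdf_mono[OF G]
    by (intro nn_integral_mono ennreal_leI) (auto simp: mono_def)
  then show "L u \<le> L v" using L_nonneg by (simp add: ennreal_le_iff)
qed

lemma L_nonpos:
  assumes "u \<le> 0"
  shows "L u = 0"
proof -
  have "u - lam * z\<^sup>2 \<le> 0" for z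
    using assms lam by (smt (verit) mult_nonneg_nonneg zero_le_power2)
  then have "kernel u z = 0" for z
    by (simp add: kernel_def log_concave_cdf_nonpos[OF G])
  then have "half_line_integral (kernel u) = 0" by simp
  then show ?thesis using half_line_integral_kernel[of u] L_nonneg[of u] by simp
qed

lemma L_pos:
  assumes "0 < u"
  shows "0 < L u"
proof -
  define d where "d = min 1 (u / (2*lam))"
  have d: "0 < d" "d \<le> 1" "lam * d \<le> u/2" using assms lam by (auto simp: d_def min_def field_simps)
  define m where "m = std_normal_density d * G (u/2)"
  have "0 < m" using assms by (simp add: m_def normal_density_pos log_concave_cdf_pos[OF G])
  have "ennreal m * indicator {0..d} z \<le> ennreal (kernel u z) * indicator {0..} z" for z
  proof (cases "z \<in> {0..d}")
    case True
    then have "z\<^sup>2 \<le> d" using d by (auto simp: power2_eq_square intro: order.trans[OF mult_left_le])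
    then have "lam * z\<^sup>2 \<le> u/2" using lam d by (smt (verit) mult_left_mono)
    then have "G (u/2) \<le> G (u - lam*z\<^sup>2)" using log_concave_cdf_mono[OF G] by (simp add: monoD)
    then have "m \<le> kernel u z" unfolding m_def kernel_def using True std_normal_density_antimono[of z d]
      by (intro mult_mono) (auto simp: log_concave_cdf_nonneg[OF G] less_imp_le[OF normal_density_pos])
    then show ?thesis using True by (simp add: ennreal_leI)
  qed simp
  then have "(\<integral>\<^sup>+ z. ennreal m * indicator {0..d} z \<partial>lborel) \<le> ennreal (L u / 2)"
    unfolding half_line_integral_kernel[symmetric] by (rule nn_integral_mono)
  then have "ennreal (m * d) \<le> ennreal (L u / 2)"
    using d \<open>0 < m\<close> by (simp add: nn_integral_cmult_indicator ennreal_mult'[symmetric])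
  then have "m * d \<le> L u / 2" using L_nonneg[of u] by (simp add: ennreal_le_iff)
  then show ?thesis using mult_pos_pos[OF \<open>0 < m\<close> \<open>0 < d\<close>] by linarith
qed

lemma L_log_concave:
  assumes t: "0 < t" "t < 1"
  shows "L x powr (1-t) * L y powr t \<le> L ((1-t)*x + t*y)"
proof (cases "0 < x \<and> 0 < y")
  case True
  define w where "w = (1-t)*x + t*y"
  have pos: "0 < kernel x 0" "0 < kernel y 0"
    using True by (simp_all add: kernel_def normal_density_pos log_concave_cdf_pos[OF G])
  have "(L x / 2) powr (1-t) * (L y / 2) powr t \<le> L w / 2"
  proof (rule prekopa_leindler_antimono[OF t])
    show "kernel x a powr (1-t) * kernel y b powr t \<le> kernel w ((1-t)*a + t*b)" for a b
      unfolding w_def by (rule kernel_log_concave[OF t])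
  qed (use L_nonneg pos in \<open>auto simp: kernel_nonneg kernel_antimono half_line_integral_kernel\<close>)
  moreover have "(L x / 2) powr (1-t) * (L y / 2) powr t = (L x powr (1-t) * L y powr t) / 2"
  proof -
    have "(2::real) powr (1-t) * 2 powr t = 2" by (simp add: powr_add[symmetric])
    then show ?thesis using L_nonneg by (simp add: powr_divide)
  qed
  ultimately show ?thesis unfolding w_def by simp
next
  case False
  then have "L x = 0 \<or> L y = 0" using L_nonpos by auto
  then show ?thesis using L_nonneg[of "(1-t)*x + t*y"] by auto
qed

theorem log_concave_cdf: "log_concave_cdf L"
  unfolding log_concave_cdf_def using L_mono L_nonpos L_pos L_log_concave by blast

end

lemma chi2_weighted_cdf_empty:
  "nu < m \<Longrightarrow> chi2_weighted_cdf lam m nu = (\<lambda>u. if 0 < u then 1 else 0)"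
  by (rule ext) (simp add: chi2_weighted_cdf_def PiM_empty space_PiM_empty)

lemma chi2_weighted_cdf_nonneg: "0 \<le> chi2_weighted_cdf lam m nu u"
  unfolding chi2_weighted_cdf_def by simp

lemma sets_chi2_weighted_sum_less:
  "{Y \<in> space (PiM J (\<lambda>_. chi2_1)). (\<Sum>n\<in>J. lam n * Y n) < u} \<in> sets (PiM J (\<lambda>_. chi2_1))"
proof -
  have "sets chi2_1 = sets borel" unfolding chi2_1_def by simp
  then have "(\<lambda>Y. Y n) \<in> borel_measurable (PiM J (\<lambda>_. chi2_1))" if "n \<in> J" for n
    using measurable_component_singleton[OF that, of "\<lambda>_. chi2_1"] measurable_cong_sets by blast
  then show ?thesis by measurable
qed

lemma chi2_weighted_cdf_rec:
  assumes "m \<le> nu"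
  shows "ennreal (chi2_weighted_cdf lam m nu u)
       = (\<integral>\<^sup>+ y. ennreal (chi2_weighted_cdf lam (Suc m) nu (u - lam m * y)) \<partial>chi2_1)"
proof -
  let ?M = "\<lambda>_::nat. chi2_1" and ?I = "{Suc m..nu}"
  interpret chi2: prob_space chi2_1 by (rule prob_space_chi2_1)
  interpret product_sigma_finite ?M
    by (simp add: product_sigma_finite_def chi2.sigma_finite_measure_axioms)
  interpret PI: prob_space "PiM ?I ?M" by (intro prob_space_PiM prob_space_chi2_1)
  interpret PJ: prob_space "PiM (insert m ?I) ?M" by (intro prob_space_PiM prob_space_chi2_1)
  have ins: "{m..nu} = insert m ?I" using assms by auto
  define A where "A = {Y \<in> space (PiM (insert m ?I) ?M). (\<Sum>n\<in>insert m ?I. lam n * Y n) < u}"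
  have [measurable]: "A \<in> sets (PiM (insert m ?I) ?M)" unfolding A_def by (rule sets_chi2_weighted_sum_less)
  have "ennreal (chi2_weighted_cdf lam m nu u) = (\<integral>\<^sup>+ Y. indicator A Y \<partial>PiM (insert m ?I) ?M)"
    unfolding chi2_weighted_cdf_def ins A_def[symmetric] by (simp add: PJ.emeasure_eq_measure)
  also have "\<dots> = (\<integral>\<^sup>+ y. (\<integral>\<^sup>+ Y. indicator A (Y(m := y)) \<partial>PiM ?I ?M) \<partial>chi2_1)"
    by (rule product_nn_integral_insert_rev) (auto intro: borel_measurable_indicator)
  also have "\<dots> = (\<integral>\<^sup>+ y. ennreal (chi2_weighted_cdf lam (Suc m) nu (u - lam m * y)) \<partial>chi2_1)"
  proof (rule nn_integral_cong)
    fix y :: real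
    define B where "B = {Y \<in> space (PiM ?I ?M). (\<Sum>n\<in>?I. lam n * Y n) < u - lam m * y}"
    have B_sets: "B \<in> sets (PiM ?I ?M)" unfolding B_def by (rule sets_chi2_weighted_sum_less)
    have "indicator A (Y(m := y)) = (indicator B Y :: ennreal)" if "Y \<in> space (PiM ?I ?M)" for Y
    proof -
      have "Y(m := y) \<in> space (PiM (insert m ?I) ?M)"
        using that by (auto simp: space_PiM PiE_def extensional_def chi2_1_def)
      moreover have "(\<Sum>n\<in>insert m ?I. lam n * (Y(m := y)) n) = lam m * y + (\<Sum>n\<in>?I. lam n * Y n)"
        by (simp add: sum.insert)
      ultimately have "Y(m := y) \<in> A \<longleftrightarrow> Y \<in> B" using that unfolding A_def B_def by auto
      then show ?thesis by (simp add: indicator_def)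
    qed
    then have "(\<integral>\<^sup>+ Y. indicator A (Y(m := y)) \<partial>PiM ?I ?M) = (\<integral>\<^sup>+ Y. indicator B Y \<partial>PiM ?I ?M)"
      by (rule nn_integral_cong)
    also have "\<dots> = emeasure (PiM ?I ?M) B"
      using B_sets by simp
    also have "\<dots> = ennreal (chi2_weighted_cdf lam (Suc m) nu (u - lam m * y))"
      unfolding chi2_weighted_cdf_def B_def by (simp add: PI.emeasure_eq_measure)
    finally show "(\<integral>\<^sup>+ Y. indicator A (Y(m := y)) \<partial>PiM ?I ?M)
        = ennreal (chi2_weighted_cdf lam (Suc m) nu (u - lam m * y))" .
  qed
  finally show ?thesis .
qed

lemma log_concave_cdf_chi2_weighted_cdf:
  assumes lam: "\<forall>n\<in>{1..nu}. 0 < lam n" and "1 \<le> m"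
  shows "log_concave_cdf (chi2_weighted_cdf lam m nu)"
proof (cases "m \<le> nu")
  case True
  then have "m \<le> Suc nu" by simp
  then show ?thesis
  proof (induction m rule: inc_induct)
    case base
    show ?case using log_concave_cdf_indicator_pos by (simp add: chi2_weighted_cdf_empty)
  next
    case (step k)
    show ?case
    proof (rule chi2_mixture.log_concave_cdf)
      show "chi2_mixture (chi2_weighted_cdf lam (Suc k) nu) (chi2_weighted_cdf lam k nu) (lam k)"
        using step lam \<open>1 \<le> m\<close> by unfold_locales (auto simp: chi2_weighted_cdf_nonneg chi2_weighted_cdf_rec)
    qed
  qed
qed (simp add: chi2_weighted_cdf_empty log_concave_cdf_indicator_pos)

lemma log_concave_shift_ratio_mono:
  fixes T :: "real \<Rightarrow> real"
  assumes pos: "\<And>u. 0 < u \<Longrightarrow> 0 < T u"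
    and lc: "\<And>x y t. 0 < t \<Longrightarrow> t < 1 \<Longrightarrow> T x powr (1-t) * T y powr t \<le> T ((1-t)*x + t*y)"
    and "0 < p" "p \<le> q" "0 < d"
  shows "T p / T (p + d) \<le> T q / T (q + d)"
proof (cases "p = q")
  case False
  then have "p < q" using assms by simp
  define t where "t = (q - p) / (q + d - p)"
  have t: "0 < t" "t < 1" using \<open>p < q\<close> \<open>0 < d\<close> by (auto simp: t_def field_simps)
  have "t * (q + d - p) = q - p" using \<open>p < q\<close> \<open>0 < d\<close> by (simp add: t_def)
  then have q: "(1-t)*p + t*(q+d) = q" and pd: "(1-(1-t))*p + (1-t)*(q+d) = p + d"
    by (simp_all add: algebra_simps)
  have "0 < T p" "0 < T (q+d)" "0 < T q" "0 < T (p+d)" using pos assms by auto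
  then have "T p * T (q + d) = (T p powr (1-t) * T (q+d) powr t) * (T p powr t * T (q+d) powr (1-t))"
    by (simp add: powr_add[symmetric] mult_ac)
  also have "\<dots> \<le> T q * T (p + d)"
    using lc[OF t, of p "q+d"] lc[of "1-t" p "q+d"] t q pd
    using \<open>0 < T q\<close> \<open>0 < T (p+d)\<close> by (intro mult_mono) auto
  finally show ?thesis
    using \<open>0 < T (q+d)\<close> \<open>0 < T (p+d)\<close> by (simp add: divide_le_eq le_divide_eq mult.commute)
qed simp

lemma Htilde_fun_pos: "\<forall>n\<in>{1..nu}. 0 < lam n \<Longrightarrow> 0 < u \<Longrightarrow> 0 < Htilde_fun lam nu u"
  by (simp add: Htilde_fun_def log_concave_cdf_pos[OF log_concave_cdf_chi2_weighted_cdf])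

lemma Htilde_fun_log_concave:
  assumes "\<forall>n\<in>{1..nu}. 0 < lam n" "0 < t" "t < 1"
  shows "Htilde_fun lam nu x powr (1-t) * Htilde_fun lam nu y powr t \<le> Htilde_fun lam nu ((1-t)*x + t*y)"
  using assms log_concave_cdf_powr_le[OF log_concave_cdf_chi2_weighted_cdf] by (simp add: Htilde_fun_def)

lemma H_fun_pos: "\<forall>n\<in>{1..nu}. 0 < lam n \<Longrightarrow> 0 < u \<Longrightarrow> 0 < H_fun lam nu u"
  by (simp add: H_fun_def log_concave_cdf_pos[OF log_concave_cdf_chi2_weighted_cdf])

lemma psi_cond_nonneg: "0 \<le> psi_cond lam nu rho y1 y2"
  by (simp add: psi_cond_def chi2_1_density_def H_fun_def Htilde_fun_def chi2_weighted_cdf_nonneg)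

lemma psi_cond_ratio:
  assumes lam: "\<forall>n\<in>{1..nu}. 0 < lam n" and "2 \<le> nu" and "y10 < y11"
    and "0 < x" and x: "lam 2 * x < rho - lam 1 * y11"
  shows "psi_cond lam nu rho y11 x / psi_cond lam nu rho y10 x
       = Htilde_fun lam nu (rho - lam 1 * y11 - lam 2 * x)
           / Htilde_fun lam nu (rho - lam 1 * y11 - lam 2 * x + lam 1 * (y11 - y10))
         * (H_fun lam nu (rho - lam 1 * y10) / H_fun lam nu (rho - lam 1 * y11))"
proof -
  have "0 < lam 1" "0 < lam 2" using lam \<open>2 \<le> nu\<close> by auto
  then have x': "lam 2 * x < rho - lam 1 * y10" using x \<open>y10 < y11\<close> by (smt (verit) mult_strict_left_mono)
  have "0 < lam 2 * x" using \<open>0 < lam 2\<close> \<open>0 < x\<close> by simp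
  then have "0 < Htilde_fun lam nu (rho - lam 1 * y11 - lam 2 * x)" "0 < Htilde_fun lam nu (rho - lam 1 * y10 - lam 2 * x)"
    "0 < H_fun lam nu (rho - lam 1 * y11)" "0 < H_fun lam nu (rho - lam 1 * y10)"
    "0 < chi2_1_density x"
    using x x' lam by (auto intro!: Htilde_fun_pos H_fun_pos simp: chi2_1_density_def \<open>0 < x\<close>)
  moreover have "x < (rho - lam 1 * y11) / lam 2" "x < (rho - lam 1 * y10) / lam 2"
    using x x' \<open>0 < lam 2\<close> by (simp_all add: field_simps)
  moreover have "rho - lam 1 * y11 - lam 2 * x + lam 1 * (y11 - y10) = rho - lam 1 * y10 - lam 2 * x"
    by (simp add: algebra_simps)
  ultimately show ?thesis using \<open>0 < x\<close> by (simp add: psi_cond_def field_simps)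
qed

theorem lemma2:
  fixes lam :: "nat \<Rightarrow> real" and nu :: nat and rho y10 y11 :: real
  assumes "2 \<le> nu" and "0 < rho" and "\<forall>n\<in>{1..nu}. 0 < lam n"
    and "0 < y10" and "y10 < y11" and "y11 < rho / lam 1"
  shows "\<forall>a b. 0 < a \<and> a \<le> b \<and> b < (rho - lam 1 * y10) / lam 2 \<longrightarrow>
           psi_cond lam nu rho y11 b / psi_cond lam nu rho y10 b
             \<le> psi_cond lam nu rho y11 a / psi_cond lam nu rho y10 a"
proof (intro allI impI)
  fix a b :: real
  assume ab: "0 < a \<and> a \<le> b \<and> b < (rho - lam 1 * y10) / lam 2"
  have "0 < lam 1" "0 < lam 2" using assms by auto
  show "psi_cond lam nu rho y11 b / psi_cond lam nu rho y10 b
      \<le> psi_cond lam nu rho y11 a / psi_cond lam nu rho y10 a"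
  proof (cases "lam 2 * b < rho - lam 1 * y11")
    case False
    then have "psi_cond lam nu rho y11 b = 0"
      using \<open>0 < lam 2\<close> by (auto simp: psi_cond_def field_simps)
    then show ?thesis using psi_cond_nonneg by simp
  next
    case True
    let ?T = "Htilde_fun lam nu" and ?c = "rho - lam 1 * y11" and ?d = "lam 1 * (y11 - y10)"
    have "lam 2 * a \<le> lam 2 * b" using ab \<open>0 < lam 2\<close> by simp
    then have a: "0 < a" "lam 2 * a < ?c" and b: "0 < b" "lam 2 * b < ?c" using ab True by auto
    have "?T (?c - lam 2 * b) / ?T (?c - lam 2 * b + ?d) \<le> ?T (?c - lam 2 * a) / ?T (?c - lam 2 * a + ?d)"
      using \<open>lam 2 * a \<le> lam 2 * b\<close> b assms \<open>0 < lam 1\<close>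
      by (intro log_concave_shift_ratio_mono Htilde_fun_pos Htilde_fun_log_concave) auto
    moreover have "0 \<le> H_fun lam nu (rho - lam 1 * y10) / H_fun lam nu (rho - lam 1 * y11)"
      by (simp add: H_fun_def chi2_weighted_cdf_nonneg)
    ultimately show ?thesis
      unfolding psi_cond_ratio[OF assms(3,1,5) a] psi_cond_ratio[OF assms(3,1,5) b]
      by (rule mult_right_mono)
  qed
qed

end
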